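(* Let $\Delta=[-\frac{\pi}{2},\frac{\pi}{2}]$ and define $K_i:\Delta\times\Delta\to\mathbb{R}$ by $K_i(x,y)=2-\frac{\pi}{2}\sin|x-y|$. For $y\in\Delta$ put $k_y=K_i(\cdot,y)$. Then for every $f\in H^1_0(\Delta)$ and every $y\in\Delta$ one has $k_y\in H^1_0(\Delta)$ and $$f(y)=\langle f,k_y\rangle_i,$$ i.e. $K_i$ is a reproducing kernel for the inner product space $(H^1_0(\Delta),\langle\cdot,\cdot\rangle_i)$.
   Context: $H^1(\Delta)$ denotes the space of absolutely continuous functions $f:\Delta\to\mathbb{R}$ whose (a.e. defined) derivative $f'$ lies in $L_2(\Delta)$. $H^1_0(\Delta)$ is the subspace of those $f\in H^1(\Delta)$ with $f(-\frac{\pi}{2})=f(\frac{\pi}{2})$. For $f,g\in H^1_0(\Delta)$, $$\langle f,g\rangle_i=\frac{1}{\pi^2}\Big[2\Big(\int_{-\pi/2}^{\pi/2}f\Big)\Big(\int_{-\pi/2}^{\pi/2}g\Big)-\pi\int_{-\pi/2}^{\pi/2}\big(fg-f'g'\big)\Big],$$ which is a positive definite inner product on $H^1_0(\Delta)$. *)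

theory Defs
  imports "HOL-Analysis.Analysis"
begin

definition Delta :: "real set" where
  "Delta = {-(pi/2) .. pi/2}"

definition abs_cont_on :: "real \<Rightarrow> real \<Rightarrow> (real \<Rightarrow> real) \<Rightarrow> bool" where
  "abs_cont_on a b f \<longleftrightarrow>
     (\<forall>e>0. \<exists>d>0. \<forall>(n::nat) (I::nat \<Rightarrow> real \<times> real).
        (\<forall>i<n. a \<le> fst (I i) \<and> fst (I i) \<le> snd (I i) \<and> snd (I i) \<le> b)
        \<and> (\<forall>i<n. \<forall>j<n. i \<noteq> j \<longrightarrow> {fst (I i) <..< snd (I i)} \<inter> {fst (I j) <..< snd (I j)} = {})
        \<and> (\<Sum>i<n. snd (I i) - fst (I i)) < d
        \<longrightarrow> (\<Sum>i<n. \<bar>f (snd (I i)) - f (fst (I i))\<bar>) < e)"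

definition H1_deriv :: "(real \<Rightarrow> real) \<Rightarrow> (real \<Rightarrow> real) \<Rightarrow> bool" where
  "H1_deriv f f' \<longleftrightarrow>
     abs_cont_on (-(pi/2)) (pi/2) f
     \<and> (AE x in lborel. x \<in> Delta \<longrightarrow> (f has_real_derivative f' x) (at x within Delta))
     \<and> set_borel_measurable lborel Delta f'
     \<and> set_integrable lborel Delta (\<lambda>x. (f' x)\<^sup>2)"

definition H1 :: "(real \<Rightarrow> real) \<Rightarrow> bool" where
  "H1 f \<longleftrightarrow> abs_cont_on (-(pi/2)) (pi/2) f \<and> (\<exists>f'. H1_deriv f f')"

definition H1_0 :: "(real \<Rightarrow> real) \<Rightarrow> bool" where
  "H1_0 f \<longleftrightarrow> H1 f \<and> f (-(pi/2)) = f (pi/2)"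

text \<open>The inner product <f,g>_i, expressed with chosen a.e. derivatives f', g'.\<close>
definition ip_i :: "(real \<Rightarrow> real) \<Rightarrow> (real \<Rightarrow> real) \<Rightarrow> (real \<Rightarrow> real) \<Rightarrow> (real \<Rightarrow> real) \<Rightarrow> real" where
  "ip_i f f' g g' = (1 / pi\<^sup>2) *
     (2 * (LINT x:Delta|lborel. f x) * (LINT x:Delta|lborel. g x)
      - pi * (LINT x:Delta|lborel. f x * g x - f' x * g' x))"

definition K_i :: "real \<Rightarrow> real \<Rightarrow> real" where
  "K_i x y = 2 - (pi/2) * sin \<bar>x - y\<bar>"

end

theory Submission
  imports Defs
begin

text \<open>Away from the diagonal the kernel is smooth in \<open>x\<close>: \<open>\<partial>\<^sub>x K\<^sub>i(x,y) = \<plusminus>(\<pi>/2) cos (x - y)\<close>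
  for \<open>x \<lessgtr> y\<close>, and differentiating once more gives \<open>(\<pi>/2) sin \<bar>x - y\<bar> = 2 - K\<^sub>i(x,y)\<close>.
  Integrating \<open>f' \<partial>\<^sub>x K\<^sub>i\<close> by parts on \<open>[-\<pi>/2, y]\<close> and on \<open>[y, \<pi>/2]\<close> therefore gives
  \<open>\<integral> f' \<partial>\<^sub>x K\<^sub>i + f (2 - K\<^sub>i) = \<pi> f(y)\<close>: the two interior boundary terms add up to \<open>\<pi> f(y)\<close> and
  the outer ones cancel because \<open>f(-\<pi>/2) = f(\<pi>/2)\<close>. For \<open>f = 1\<close> this says \<open>\<integral> K\<^sub>i(\<cdot>,y) = \<pi>\<close>,
  and substituting both identities into the definition of \<open>\<langle>f, k\<^sub>y\<rangle>\<^sub>i\<close> leaves \<open>f(y)\<close>.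
  Integration by parts for an absolutely continuous \<open>f\<close> with a merely a.e. derivative rests on the
  fundamental theorem of calculus for the Henstock-Kurzweil integral: in a fine tagged division,
  tags in the exceptional null set carry little total length, so absolute continuity controls
  them, and every other tag is controlled by the straddle lemma.\<close>

section \<open>Absolute continuity\<close>

definition nonoverlapping_intervals :: "real \<Rightarrow> real \<Rightarrow> nat \<Rightarrow> (nat \<Rightarrow> real \<times> real) \<Rightarrow> bool" where
  "nonoverlapping_intervals a b n I \<longleftrightarrow>
     (\<forall>i<n. a \<le> fst (I i) \<and> fst (I i) \<le> snd (I i) \<and> snd (I i) \<le> b)
     \<and> (\<forall>i<n. \<forall>j<n. i \<noteq> j \<longrightarrow> {fst (I i) <..< snd (I i)} \<inter> {fst (I j) <..< snd (I j)} = {})"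

lemma abs_cont_on_iff:
  "abs_cont_on a b f \<longleftrightarrow>
     (\<forall>e>0. \<exists>d>0. \<forall>n I. nonoverlapping_intervals a b n I \<longrightarrow> (\<Sum>i<n. snd (I i) - fst (I i)) < d
        \<longrightarrow> (\<Sum>i<n. \<bar>f (snd (I i)) - f (fst (I i))\<bar>) < e)"
  unfolding abs_cont_on_def nonoverlapping_intervals_def by (simp only: conj_assoc imp_conjL)

lemma abs_cont_onE:
  assumes "abs_cont_on a b f" "e > 0"
  obtains d where "d > 0"
    "\<And>n I. nonoverlapping_intervals a b n I \<Longrightarrow> (\<Sum>i<n. snd (I i) - fst (I i)) < d
       \<Longrightarrow> (\<Sum>i<n. \<bar>f (snd (I i)) - f (fst (I i))\<bar>) < e"
  using assms unfolding abs_cont_on_iff by blast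

lemma nonoverlapping_intervals_subinterval:
  "nonoverlapping_intervals a' b' n I \<Longrightarrow> a \<le> a' \<Longrightarrow> b' \<le> b \<Longrightarrow> nonoverlapping_intervals a b n I"
  unfolding nonoverlapping_intervals_def by (meson order_trans)

lemma abs_cont_on_subinterval:
  assumes "abs_cont_on a b f" "a \<le> a'" "b' \<le> b"
  shows "abs_cont_on a' b' f"
proof (unfold abs_cont_on_iff, intro allI impI)
  fix e :: real
  assume "e > 0"
  obtain d where "d > 0" and "\<And>n I. nonoverlapping_intervals a b n I
      \<Longrightarrow> (\<Sum>i<n. snd (I i) - fst (I i)) < d \<Longrightarrow> (\<Sum>i<n. \<bar>f (snd (I i)) - f (fst (I i))\<bar>) < e"
    using abs_cont_onE[OF assms(1) \<open>e > 0\<close>] by blast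
  then show "\<exists>d>0. \<forall>n I. nonoverlapping_intervals a' b' n I \<longrightarrow> (\<Sum>i<n. snd (I i) - fst (I i)) < d
      \<longrightarrow> (\<Sum>i<n. \<bar>f (snd (I i)) - f (fst (I i))\<bar>) < e"
    using nonoverlapping_intervals_subinterval[OF _ assms(2,3)] by blast
qed

lemma abs_cont_on_imp_continuous_on:
  assumes "abs_cont_on a b f"
  shows "continuous_on {a..b} f"
  unfolding continuous_on_iff
proof (intro ballI allI impI)
  fix x e :: real
  assume x: "x \<in> {a..b}" and "e > 0"
  obtain d where "d > 0" and d: "\<And>n I. nonoverlapping_intervals a b n I
      \<Longrightarrow> (\<Sum>i<n. snd (I i) - fst (I i)) < d \<Longrightarrow> (\<Sum>i<n. \<bar>f (snd (I i)) - f (fst (I i))\<bar>) < e"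
    using abs_cont_onE[OF assms \<open>e > 0\<close>] by blast
  have "dist (f x') (f x) < e" if x': "x' \<in> {a..b}" "dist x' x < d" for x'
  proof -
    have "nonoverlapping_intervals a b 1 (\<lambda>_. (min x x', max x x'))"
      using x x' by (auto simp: nonoverlapping_intervals_def)
    moreover have "max x x' - min x x' < d"
      using x' by (auto simp: dist_real_def)
    ultimately have "\<bar>f (max x x') - f (min x x')\<bar> < e"
      using d[of 1 "\<lambda>_. (min x x', max x x')"] by simp
    then show ?thesis
      by (cases "x \<le> x'") (auto simp: dist_real_def abs_minus_commute)
  qed
  with \<open>d > 0\<close> show "\<exists>d>0. \<forall>x'\<in>{a..b}. dist x' x < d \<longrightarrow> dist (f x') (f x) < e"
    by blast
qed

lemma abs_cont_on_set_integrable: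
  assumes "abs_cont_on a b f"
  shows "set_integrable lborel {a..b} f"
  unfolding set_integrable_def
  by (rule borel_integrable_compact[OF compact_Icc abs_cont_on_imp_continuous_on[OF assms]])

lemma lipschitz_on_imp_abs_cont_on:
  assumes "L-lipschitz_on {a..b} f"
  shows "abs_cont_on a b f"
  unfolding abs_cont_on_iff
proof (intro allI impI)
  fix e :: real
  assume "e > 0"
  have L: "L \<ge> 0"
    using assms by (rule lipschitz_on_nonneg)
  show "\<exists>d>0. \<forall>n I. nonoverlapping_intervals a b n I \<longrightarrow> (\<Sum>i<n. snd (I i) - fst (I i)) < d
      \<longrightarrow> (\<Sum>i<n. \<bar>f (snd (I i)) - f (fst (I i))\<bar>) < e"
  proof (intro exI conjI allI impI)
    show "e / (L + 1) > 0"
      using \<open>e > 0\<close> L by simp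
    fix n I
    assume I: "nonoverlapping_intervals a b n I" and len: "(\<Sum>i<n. snd (I i) - fst (I i)) < e / (L + 1)"
    have "(\<Sum>i<n. \<bar>f (snd (I i)) - f (fst (I i))\<bar>) \<le> (\<Sum>i<n. L * (snd (I i) - fst (I i)))"
    proof (rule sum_mono)
      fix i
      assume "i \<in> {..<n}"
      then have "fst (I i) \<in> {a..b}" "snd (I i) \<in> {a..b}" "fst (I i) \<le> snd (I i)"
        using I by (auto simp: nonoverlapping_intervals_def)
      then show "\<bar>f (snd (I i)) - f (fst (I i))\<bar> \<le> L * (snd (I i) - fst (I i))"
        using lipschitz_onD[OF assms] by (fastforce simp: dist_real_def)
    qed
    also have "\<dots> \<le> L * (e / (L + 1))"
      using mult_left_mono[OF less_imp_le[OF len] L] by (simp add: sum_distrib_left)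
    also have "\<dots> < e"
      using \<open>e > 0\<close> L by (simp add: field_simps)
    finally show "(\<Sum>i<n. \<bar>f (snd (I i)) - f (fst (I i))\<bar>) < e" .
  qed
qed

lemma abs_cont_on_dominated:
  assumes f: "abs_cont_on a b f" and g: "abs_cont_on a b g" and "A > 0" "B > 0"
    and dom: "\<And>u v. a \<le> u \<Longrightarrow> u \<le> v \<Longrightarrow> v \<le> b \<Longrightarrow> \<bar>h v - h u\<bar> \<le> A * \<bar>f v - f u\<bar> + B * \<bar>g v - g u\<bar>"
  shows "abs_cont_on a b h"
  unfolding abs_cont_on_iff
proof (intro allI impI)
  fix e :: real
  assume "e > 0"
  then have "e / (2 * A) > 0" "e / (2 * B) > 0"
    using \<open>A > 0\<close> \<open>B > 0\<close> by simp_all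
  obtain df where "df > 0"
    and df: "\<And>n I. nonoverlapping_intervals a b n I \<Longrightarrow> (\<Sum>i<n. snd (I i) - fst (I i)) < df
      \<Longrightarrow> (\<Sum>i<n. \<bar>f (snd (I i)) - f (fst (I i))\<bar>) < e / (2 * A)"
    using abs_cont_onE[OF f \<open>e / (2 * A) > 0\<close>] by blast
  obtain dg where "dg > 0"
    and dg: "\<And>n I. nonoverlapping_intervals a b n I \<Longrightarrow> (\<Sum>i<n. snd (I i) - fst (I i)) < dg
      \<Longrightarrow> (\<Sum>i<n. \<bar>g (snd (I i)) - g (fst (I i))\<bar>) < e / (2 * B)"
    using abs_cont_onE[OF g \<open>e / (2 * B) > 0\<close>] by blast
  have "(\<Sum>i<n. \<bar>h (snd (I i)) - h (fst (I i))\<bar>) < e"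
    if I: "nonoverlapping_intervals a b n I" and len: "(\<Sum>i<n. snd (I i) - fst (I i)) < min df dg" for n I
  proof -
    let ?df = "\<lambda>i. \<bar>f (snd (I i)) - f (fst (I i))\<bar>" and ?dg = "\<lambda>i. \<bar>g (snd (I i)) - g (fst (I i))\<bar>"
    have "(\<Sum>i<n. \<bar>h (snd (I i)) - h (fst (I i))\<bar>) \<le> (\<Sum>i<n. A * ?df i + B * ?dg i)"
      using I by (intro sum_mono dom) (auto simp: nonoverlapping_intervals_def)
    also have "\<dots> = A * (\<Sum>i<n. ?df i) + B * (\<Sum>i<n. ?dg i)"
      by (simp add: sum.distrib sum_distrib_left)
    also have "\<dots> < A * (e / (2 * A)) + B * (e / (2 * B))"
      using df[OF I] dg[OF I] len \<open>A > 0\<close> \<open>B > 0\<close>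
      by (intro add_strict_mono mult_strict_left_mono) simp_all
    also have "\<dots> = e"
      using \<open>A > 0\<close> \<open>B > 0\<close> by simp
    finally show ?thesis .
  qed
  with \<open>df > 0\<close> \<open>dg > 0\<close>
  show "\<exists>d>0. \<forall>n I. nonoverlapping_intervals a b n I \<longrightarrow> (\<Sum>i<n. snd (I i) - fst (I i)) < d
      \<longrightarrow> (\<Sum>i<n. \<bar>h (snd (I i)) - h (fst (I i))\<bar>) < e"
    by (intro exI[of _ "min df dg"]) auto
qed

lemma abs_cont_on_mult:
  assumes f: "abs_cont_on a b f" and g: "abs_cont_on a b g"
  shows "abs_cont_on a b (\<lambda>x. f x * g x)"
proof -
  have "bounded (f ` {a..b})" "bounded (g ` {a..b})"
    using f g by (auto intro: compact_imp_bounded compact_continuous_image abs_cont_on_imp_continuous_on)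
  then obtain Bf Bg where "Bf > 0" "Bg > 0"
    and Bf: "\<And>x. x \<in> {a..b} \<Longrightarrow> \<bar>f x\<bar> \<le> Bf" and Bg: "\<And>x. x \<in> {a..b} \<Longrightarrow> \<bar>g x\<bar> \<le> Bg"
    unfolding bounded_pos by auto
  show ?thesis
  proof (rule abs_cont_on_dominated[OF f g, of Bg Bf])
    fix u v
    assume "a \<le> u" "u \<le> v" "v \<le> b"
    then have uv: "u \<in> {a..b}" "v \<in> {a..b}"
      by auto
    have "f v * g v - f u * g u = g v * (f v - f u) + f u * (g v - g u)"
      by (simp add: algebra_simps)
    then have "\<bar>f v * g v - f u * g u\<bar> \<le> \<bar>g v\<bar> * \<bar>f v - f u\<bar> + \<bar>f u\<bar> * \<bar>g v - g u\<bar>"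
      by (metis abs_mult abs_triangle_ineq)
    also have "\<dots> \<le> Bg * \<bar>f v - f u\<bar> + Bf * \<bar>g v - g u\<bar>"
      using Bf[OF uv(1)] Bg[OF uv(2)] by (intro add_mono mult_right_mono) auto
    finally show "\<bar>f v * g v - f u * g u\<bar> \<le> Bg * \<bar>f v - f u\<bar> + Bf * \<bar>g v - g u\<bar>" .
  qed (fact \<open>Bg > 0\<close> \<open>Bf > 0\<close>)+
qed

section \<open>Fundamental theorem of calculus for absolutely continuous functions\<close>

lemma tagged_partial_division_real_interval:
  fixes a b x :: real
  assumes "p tagged_partial_division_of {a..b}" "(x, K) \<in> p"
  shows "K = {Inf K..Sup K}" "Inf K \<le> x" "x \<le> Sup K" "a \<le> Inf K" "Sup K \<le> b"
    "measure lborel K = Sup K - Inf K"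
proof -
  obtain u v where K: "K = {u..v}"
    using tagged_partial_division_ofD(4)[OF assms] by (metis cbox_interval)
  moreover have "x \<in> K" "K \<subseteq> {a..b}"
    using tagged_partial_division_ofD(2,3)[OF assms] by auto
  ultimately show "K = {Inf K..Sup K}" "Inf K \<le> x" "x \<le> Sup K" "a \<le> Inf K" "Sup K \<le> b" by auto
  then show "measure lborel K = Sup K - Inf K"
    using content_real[of "Inf K" "Sup K"] by simp
qed

lemma tagged_partial_division_nonoverlapping:
  fixes a b :: real
  assumes q: "q tagged_partial_division_of {a..b}" and h: "bij_betw h {..<n} q"
  shows "nonoverlapping_intervals a b n (\<lambda>i. (Inf (snd (h i)), Sup (snd (h i))))"
  unfolding nonoverlapping_intervals_def fst_conv snd_conv
proof (rule conjI; intro allI impI)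
  have hq: "h i \<in> q" if "i < n" for i
    using h that by (auto simp: bij_betw_def)
  have K: "snd (h i) = {Inf (snd (h i))..Sup (snd (h i))}" "Inf (snd (h i)) \<le> Sup (snd (h i))"
    "a \<le> Inf (snd (h i))" "Sup (snd (h i)) \<le> b" if "i < n" for i
    using tagged_partial_division_real_interval[OF q, of "fst (h i)" "snd (h i)"] hq[OF that] by auto
  fix i
  assume "i < n"
  then show "a \<le> Inf (snd (h i)) \<and> Inf (snd (h i)) \<le> Sup (snd (h i)) \<and> Sup (snd (h i)) \<le> b"
    using K by blast
  fix j
  assume "j < n" "i \<noteq> j"
  then have "h i \<noteq> h j"
    using h \<open>i < n\<close> by (auto simp: bij_betw_def inj_on_def)
  then have "interior (snd (h i)) \<inter> interior (snd (h j)) = {}"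
    using tagged_partial_division_ofD(5)[OF q] hq[OF \<open>i < n\<close>] hq[OF \<open>j < n\<close>] by (metis prod.collapse)
  then show "{Inf (snd (h i))<..<Sup (snd (h i))} \<inter> {Inf (snd (h j))<..<Sup (snd (h j))} = {}"
    using K(1)[OF \<open>i < n\<close>] K(1)[OF \<open>j < n\<close>] by (metis interior_atLeastAtMost_real)
qed

lemma abs_cont_on_tagged_partial_division:
  assumes "abs_cont_on a b F" "e > 0"
  obtains d where "d > 0"
    "\<And>q. q tagged_partial_division_of {a..b} \<Longrightarrow> (\<Sum>(x, K)\<in>q. measure lborel K) < d
       \<Longrightarrow> (\<Sum>(x, K)\<in>q. \<bar>F (Sup K) - F (Inf K)\<bar>) < e"
proof -
  obtain d where "d > 0" and d: "\<And>n I. nonoverlapping_intervals a b n I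
      \<Longrightarrow> (\<Sum>i<n. snd (I i) - fst (I i)) < d \<Longrightarrow> (\<Sum>i<n. \<bar>F (snd (I i)) - F (fst (I i))\<bar>) < e"
    using abs_cont_onE[OF assms] by blast
  have sum_small: "(\<Sum>(x, K)\<in>q. \<bar>F (Sup K) - F (Inf K)\<bar>) < e"
    if q: "q tagged_partial_division_of {a..b}" and small: "(\<Sum>(x, K)\<in>q. measure lborel K) < d" for q
  proof -
    obtain h where h: "bij_betw h {..<card q} q"
      using ex_bij_betw_nat_finite[OF tagged_partial_division_ofD(1)[OF q]] by (auto simp: lessThan_atLeast0)
    have reindex: "(\<Sum>i<card q. G (h i)) = (\<Sum>xK\<in>q. G xK)" for G :: "real \<times> real set \<Rightarrow> real"
      using sum.reindex_bij_betw[OF h] .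
    have "(\<Sum>i<card q. Sup (snd (h i)) - Inf (snd (h i))) = (\<Sum>(x, K)\<in>q. Sup K - Inf K)"
      using reindex[of "\<lambda>(x, K). Sup K - Inf K"] by (simp add: split_def)
    also have "\<dots> = (\<Sum>(x, K)\<in>q. measure lborel K)"
      using tagged_partial_division_real_interval(6)[OF q] by (intro sum.cong) auto
    finally have "(\<Sum>i<card q. \<bar>F (Sup (snd (h i))) - F (Inf (snd (h i)))\<bar>) < e"
      using d[OF tagged_partial_division_nonoverlapping[OF q h]] small by simp
    then show ?thesis
      using reindex[of "\<lambda>(x, K). \<bar>F (Sup K) - F (Inf K)\<bar>"] by (simp add: split_def)
  qed
  show ?thesis
    using that[OF \<open>d > 0\<close> sum_small] .
qed

lemma negligible_tagged_division_small:
  fixes S :: "real set" and a b :: real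
  assumes "negligible S" "d > 0"
  obtains \<gamma> where "gauge \<gamma>"
    "\<And>p. p tagged_division_of {a..b} \<Longrightarrow> \<gamma> fine p
       \<Longrightarrow> (\<Sum>(x, K)\<in>{(x, K)\<in>p. x \<in> S}. measure lborel K) < d"
proof -
  have "((indicator S :: real \<Rightarrow> real) has_integral 0) {a..b}"
    using assms(1) unfolding negligible_def by (metis box_real(2))
  then obtain \<gamma> where "gauge \<gamma>" and \<gamma>: "\<And>p. p tagged_division_of {a..b} \<Longrightarrow> \<gamma> fine p
      \<Longrightarrow> \<bar>(\<Sum>(x, K)\<in>p. measure lborel K * indicator S x) - 0\<bar> < d"
    using assms(2) unfolding has_integral_real real_norm_def real_scaleR_def by meson
  have small: "(\<Sum>(x, K)\<in>{(x, K)\<in>p. x \<in> S}. measure lborel K) < d"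
    if "p tagged_division_of {a..b}" "\<gamma> fine p" for p
  proof -
    have "(\<Sum>(x, K)\<in>p. measure lborel K * indicator S x) = (\<Sum>(x, K)\<in>p. if x \<in> S then measure lborel K else 0)"
      by (intro sum.cong) (auto simp: indicator_def)
    also have "\<dots> = (\<Sum>(x, K)\<in>{(x, K)\<in>p. x \<in> S}. measure lborel K)"
      using tagged_division_ofD(1)[OF that(1)] by (simp add: sum.inter_filter split_def)
    finally show ?thesis
      using \<gamma>[OF that] by linarith
  qed
  show ?thesis
    using that[OF \<open>gauge \<gamma>\<close> small] .
qed

lemma abs_cont_on_negligible_tags:
  fixes S :: "real set"
  assumes "abs_cont_on a b F" "negligible S" "e > 0"
  obtains \<gamma> where "gauge \<gamma>"
    "\<And>p. p tagged_division_of {a..b} \<Longrightarrow> \<gamma> fine p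
       \<Longrightarrow> (\<Sum>(x, K)\<in>{(x, K)\<in>p. x \<in> S}. \<bar>F (Sup K) - F (Inf K)\<bar>) < e"
proof -
  obtain d where "d > 0" and d: "\<And>q. q tagged_partial_division_of {a..b}
      \<Longrightarrow> (\<Sum>(x, K)\<in>q. measure lborel K) < d \<Longrightarrow> (\<Sum>(x, K)\<in>q. \<bar>F (Sup K) - F (Inf K)\<bar>) < e"
    using abs_cont_on_tagged_partial_division[OF assms(1,3)] by blast
  obtain \<gamma> where "gauge \<gamma>" and \<gamma>: "\<And>p. p tagged_division_of {a..b} \<Longrightarrow> \<gamma> fine p
      \<Longrightarrow> (\<Sum>(x, K)\<in>{(x, K)\<in>p. x \<in> S}. measure lborel K) < d"
    using negligible_tagged_division_small[OF assms(2) \<open>d > 0\<close>] by blast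
  have small: "(\<Sum>(x, K)\<in>{(x, K)\<in>p. x \<in> S}. \<bar>F (Sup K) - F (Inf K)\<bar>) < e"
    if "p tagged_division_of {a..b}" "\<gamma> fine p" for p
  proof (rule d[OF tagged_partial_division_subset \<gamma>[OF that]])
    show "p tagged_partial_division_of {a..b}"
      using that(1) by (auto simp: tagged_division_of_def)
  qed auto
  show ?thesis
    using that[OF \<open>gauge \<gamma>\<close> small] .
qed

lemma has_real_derivative_straddle:
  fixes F :: "real \<Rightarrow> real"
  assumes "(F has_real_derivative g) (at x within S)" "e > 0"
  obtains r where "r > 0"
    "\<And>u v. u \<in> S \<Longrightarrow> v \<in> S \<Longrightarrow> u \<le> x \<Longrightarrow> x \<le> v \<Longrightarrow> x - u < r \<Longrightarrow> v - x < r
       \<Longrightarrow> \<bar>(v - u) * g - (F v - F u)\<bar> \<le> e * (v - u)"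
proof -
  obtain r where "r > 0"
    and r: "\<And>z. z \<in> S \<Longrightarrow> \<bar>z - x\<bar> < r \<Longrightarrow> \<bar>F z - F x - g * (z - x)\<bar> \<le> e * \<bar>z - x\<bar>"
    using assms unfolding has_field_derivative_def has_derivative_within_alt by (force simp: mult.commute)
  have straddle: "\<bar>(v - u) * g - (F v - F u)\<bar> \<le> e * (v - u)"
    if "u \<in> S" "v \<in> S" "u \<le> x" "x \<le> v" "x - u < r" "v - x < r" for u v
  proof -
    have "(v - u) * g - (F v - F u) = (F u - F x - g * (u - x)) - (F v - F x - g * (v - x))"
      by (simp add: algebra_simps)
    then have "\<bar>(v - u) * g - (F v - F u)\<bar>
        \<le> \<bar>F u - F x - g * (u - x)\<bar> + \<bar>F v - F x - g * (v - x)\<bar>"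
      by (simp only: abs_triangle_ineq4)
    also have "\<dots> \<le> e * \<bar>u - x\<bar> + e * \<bar>v - x\<bar>"
      by (intro add_mono r) (use that in auto)
    also have "\<dots> = e * (v - u)"
      using that by (simp add: algebra_simps)
    finally show ?thesis .
  qed
  show ?thesis
    using that[OF \<open>r > 0\<close> straddle] .
qed

lemma has_real_derivative_gauge_straddle:
  fixes F :: "real \<Rightarrow> real"
  assumes deriv: "\<And>x. x \<in> {a..b} - S \<Longrightarrow> (F has_real_derivative g x) (at x within {a..b})"
    and "\<epsilon> > 0"
  obtains \<gamma> where "gauge \<gamma>"
    "\<And>p x K. p tagged_partial_division_of {a..b} \<Longrightarrow> \<gamma> fine p \<Longrightarrow> (x, K) \<in> p \<Longrightarrow> x \<notin> S
       \<Longrightarrow> \<bar>measure lborel K * g x - (F (Sup K) - F (Inf K))\<bar> \<le> \<epsilon> * measure lborel K"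
proof -
  have "\<forall>x. \<exists>r>0. x \<in> {a..b} - S \<longrightarrow> (\<forall>u v. u \<in> {a..b} \<longrightarrow> v \<in> {a..b} \<longrightarrow> u \<le> x \<longrightarrow> x \<le> v
      \<longrightarrow> x - u < r \<longrightarrow> v - x < r \<longrightarrow> \<bar>(v - u) * g x - (F v - F u)\<bar> \<le> \<epsilon> * (v - u))"
    by (metis has_real_derivative_straddle[OF deriv \<open>\<epsilon> > 0\<close>] zero_less_one)
  then obtain r where r: "\<And>x. r x > 0" and straddle: "\<And>x u v. x \<in> {a..b} - S \<Longrightarrow> u \<in> {a..b}
      \<Longrightarrow> v \<in> {a..b} \<Longrightarrow> u \<le> x \<Longrightarrow> x \<le> v \<Longrightarrow> x - u < r x \<Longrightarrow> v - x < r x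
      \<Longrightarrow> \<bar>(v - u) * g x - (F v - F u)\<bar> \<le> \<epsilon> * (v - u)"
    by metis
  have "\<bar>measure lborel K * g x - (F (Sup K) - F (Inf K))\<bar> \<le> \<epsilon> * measure lborel K"
    if p: "p tagged_partial_division_of {a..b}" "(\<lambda>x. ball x (r x)) fine p" "(x, K) \<in> p" "x \<notin> S"
    for p x K
  proof -
    note K = tagged_partial_division_real_interval[OF p(1,3)]
    have "x \<in> {a..b}" "Inf K \<in> {a..b}" "Sup K \<in> {a..b}"
      using K by auto
    moreover have "K \<subseteq> ball x (r x)"
      using p(2,3) unfolding fine_def by blast
    then have "Inf K \<in> ball x (r x)" "Sup K \<in> ball x (r x)"
      using K(1,2,3) by (metis atLeastAtMost_iff order.refl order.trans subsetD)+
    ultimately show ?thesis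
      using straddle[of x "Inf K" "Sup K"] K \<open>x \<notin> S\<close> by (simp add: dist_real_def)
  qed
  moreover have "gauge (\<lambda>x. ball x (r x))"
    by (rule gauge_ball_dependent) (simp add: r)
  ultimately show ?thesis
    using that by blast
qed

lemma tagged_division_sum_close_to_increment:
  fixes F g :: "real \<Rightarrow> real"
  assumes p: "p tagged_division_of {a..b}" and "a \<le> b" "\<epsilon> \<ge> 0"
    and g0: "\<And>x. x \<in> S \<Longrightarrow> g x = 0"
    and tags_S: "(\<Sum>(x, K)\<in>{(x, K)\<in>p. x \<in> S}. \<bar>F (Sup K) - F (Inf K)\<bar>) \<le> \<delta>"
    and tags_N: "\<And>x K. (x, K) \<in> p \<Longrightarrow> x \<notin> S
      \<Longrightarrow> \<bar>measure lborel K * g x - (F (Sup K) - F (Inf K))\<bar> \<le> \<epsilon> * measure lborel K"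
  shows "\<bar>(\<Sum>(x, K)\<in>p. measure lborel K *\<^sub>R g x) - (F b - F a)\<bar> \<le> \<delta> + \<epsilon> * (b - a)"
proof -
  have "finite p"
    using p by blast
  let ?pS = "{(x, K)\<in>p. x \<in> S}" and ?pN = "{(x, K)\<in>p. x \<notin> S}"
  let ?err = "\<lambda>(x, K). measure lborel K * g x - (F (Sup K) - F (Inf K))"
  have "(\<Sum>(x, K)\<in>p. measure lborel K *\<^sub>R g x) - (F b - F a) = sum ?err p"
    using additive_tagged_division_1[OF \<open>a \<le> b\<close> p, of F] by (simp add: sum_subtractf split_def)
  also have "\<dots> = sum ?err ?pS + sum ?err ?pN"
    using \<open>finite p\<close> by (subst sum.union_disjoint[symmetric]) (auto intro: sum.cong rev_finite_subset)
  finally have split: "(\<Sum>(x, K)\<in>p. measure lborel K *\<^sub>R g x) - (F b - F a) = sum ?err ?pS + sum ?err ?pN" .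
  have "sum ?err ?pS = (\<Sum>(x, K)\<in>?pS. F (Inf K) - F (Sup K))"
    using g0 by (intro sum.cong) auto
  then have "\<bar>sum ?err ?pS\<bar> \<le> (\<Sum>(x, K)\<in>?pS. \<bar>F (Sup K) - F (Inf K)\<bar>)"
    using sum_abs[of "\<lambda>(x, K). F (Inf K) - F (Sup K)" ?pS] by (simp add: split_def abs_minus_commute)
  with tags_S have err_S: "\<bar>sum ?err ?pS\<bar> \<le> \<delta>"
    by linarith
  have "\<bar>sum ?err ?pN\<bar> \<le> (\<Sum>(x, K)\<in>?pN. \<epsilon> * measure lborel K)"
    using tags_N by (intro order_trans[OF sum_abs sum_mono]) auto
  also have "\<dots> \<le> \<epsilon> * (\<Sum>(x, K)\<in>p. measure lborel K)"
    using \<open>finite p\<close> \<open>\<epsilon> \<ge> 0\<close>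
    by (simp add: sum_distrib_left[symmetric] split_def) (intro mult_left_mono sum_mono2, auto)
  also have "\<dots> = \<epsilon> * (b - a)"
    using additive_content_tagged_division[of p a b] p \<open>a \<le> b\<close> by simp
  finally show ?thesis
    using split err_S by linarith
qed

lemma has_integral_abs_cont_on_off_negligible:
  fixes F g :: "real \<Rightarrow> real"
  assumes "a \<le> b" and F: "abs_cont_on a b F" and "negligible S"
    and deriv: "\<And>x. x \<in> {a..b} - S \<Longrightarrow> (F has_real_derivative g x) (at x within {a..b})"
    and g0: "\<And>x. x \<in> S \<Longrightarrow> g x = 0"
  shows "(g has_integral (F b - F a)) {a..b}"
  unfolding has_integral_real
proof (intro allI impI)
  fix e :: real
  assume "e > 0"
  define \<epsilon> where "\<epsilon> = e / (2 * (b - a + 1))"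
  have "e / 2 > 0" "\<epsilon> > 0" "\<epsilon> * (b - a) < e / 2"
    using \<open>e > 0\<close> \<open>a \<le> b\<close> by (simp_all add: \<epsilon>_def field_simps)
  obtain \<gamma>S where "gauge \<gamma>S" and \<gamma>S: "\<And>p. p tagged_division_of {a..b} \<Longrightarrow> \<gamma>S fine p
      \<Longrightarrow> (\<Sum>(x, K)\<in>{(x, K)\<in>p. x \<in> S}. \<bar>F (Sup K) - F (Inf K)\<bar>) < e / 2"
    using abs_cont_on_negligible_tags[OF F \<open>negligible S\<close> \<open>e / 2 > 0\<close>] by blast
  obtain \<gamma>N where "gauge \<gamma>N" and \<gamma>N: "\<And>p x K. p tagged_partial_division_of {a..b} \<Longrightarrow> \<gamma>N fine p
      \<Longrightarrow> (x, K) \<in> p \<Longrightarrow> x \<notin> S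
      \<Longrightarrow> \<bar>measure lborel K * g x - (F (Sup K) - F (Inf K))\<bar> \<le> \<epsilon> * measure lborel K"
    using has_real_derivative_gauge_straddle[OF deriv \<open>\<epsilon> > 0\<close>] by blast
  have "norm ((\<Sum>(x, K)\<in>p. measure lborel K *\<^sub>R g x) - (F b - F a)) < e"
    if p: "p tagged_division_of {a..b}" and fine: "(\<lambda>x. \<gamma>S x \<inter> \<gamma>N x) fine p" for p
  proof -
    have "p tagged_partial_division_of {a..b}"
      using p by (simp add: tagged_division_of_def)
    then have "\<bar>(\<Sum>(x, K)\<in>p. measure lborel K *\<^sub>R g x) - (F b - F a)\<bar> \<le> e / 2 + \<epsilon> * (b - a)"
      using \<gamma>S[OF p] \<gamma>N fine \<open>\<epsilon> > 0\<close>
      by (intro tagged_division_sum_close_to_increment[OF p \<open>a \<le> b\<close> _ g0]) (auto simp: fine_Int)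
    then show ?thesis
      using \<open>\<epsilon> * (b - a) < e / 2\<close> by simp
  qed
  moreover have "gauge (\<lambda>x. \<gamma>S x \<inter> \<gamma>N x)"
    using \<open>gauge \<gamma>S\<close> \<open>gauge \<gamma>N\<close> by (rule gauge_Int)
  ultimately show "\<exists>\<gamma>. gauge \<gamma> \<and> (\<forall>p. p tagged_division_of {a..b} \<and> \<gamma> fine p \<longrightarrow>
      norm ((\<Sum>(x, K)\<in>p. measure lborel K *\<^sub>R g x) - (F b - F a)) < e)"
    by blast
qed

lemma fundamental_theorem_of_calculus_abs_cont:
  fixes F g :: "real \<Rightarrow> real"
  assumes "a \<le> b" "abs_cont_on a b F"
    and "AE x in lborel. x \<in> {a..b} \<longrightarrow> (F has_real_derivative g x) (at x within {a..b})"
  shows "(g has_integral (F b - F a)) {a..b}"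
proof -
  obtain N where "negligible N"
    and N: "\<And>x. x \<notin> N \<Longrightarrow> x \<in> {a..b} \<longrightarrow> (F has_real_derivative g x) (at x within {a..b})"
    using AE_completion[OF assms(3)] unfolding eventually_ae_filter_negligible by blast
  have "((\<lambda>x. if x \<in> N then 0 else g x) has_integral (F b - F a)) {a..b}"
    by (rule has_integral_abs_cont_on_off_negligible[OF assms(1,2) \<open>negligible N\<close>]) (use N in auto)
  then show ?thesis
    by (rule has_integral_spike[OF \<open>negligible N\<close>, rotated]) auto
qed

lemma AE_has_real_derivative_within_subset:
  assumes "AE x in lborel. x \<in> T \<longrightarrow> (f has_real_derivative f' x) (at x within T)" "S \<subseteq> T"
  shows "AE x in lborel. x \<in> S \<longrightarrow> (f has_real_derivative f' x) (at x within S)"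
  using assms(1) by eventually_elim (use assms(2) in \<open>auto intro: DERIV_subset\<close>)

lemma integration_by_parts_abs_cont:
  fixes f h :: "real \<Rightarrow> real"
  assumes "a \<le> b" "abs_cont_on a b f" "abs_cont_on a b h"
    and f': "AE x in lborel. x \<in> {a..b} \<longrightarrow> (f has_real_derivative f' x) (at x within {a..b})"
    and h': "AE x in lborel. x \<in> {a..b} \<longrightarrow> (h has_real_derivative h' x) (at x within {a..b})"
  shows "((\<lambda>x. f' x * h x + f x * h' x) has_integral (f b * h b - f a * h a)) {a..b}"
proof (rule fundamental_theorem_of_calculus_abs_cont[OF \<open>a \<le> b\<close> abs_cont_on_mult[OF assms(2,3)]])
  show "AE x in lborel. x \<in> {a..b} \<longrightarrow>
      ((\<lambda>x. f x * h x) has_real_derivative f' x * h x + f x * h' x) (at x within {a..b})"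
    using f' h' by eventually_elim (auto intro!: derivative_eq_intros)
qed

section \<open>Lipschitz bounds and integrability\<close>

lemma lipschitz_on_sin: "1-lipschitz_on S (sin :: real \<Rightarrow> real)"
proof (rule lipschitz_onI)
  fix x y :: real
  have "\<bar>sin x - sin y\<bar> = 2 * \<bar>sin ((x - y) / 2)\<bar> * \<bar>cos ((x + y) / 2)\<bar>"
    by (simp add: sin_diff_sin abs_mult)
  also have "\<dots> \<le> 2 * \<bar>(x - y) / 2\<bar> * 1"
    using abs_sin_x_le_abs_x[of "(x - y) / 2"] by (intro mult_mono) auto
  finally show "dist (sin x) (sin y) \<le> 1 * dist x y"
    by (simp add: dist_real_def)
qed simp

lemma lipschitz_on_cos: "1-lipschitz_on S (cos :: real \<Rightarrow> real)"
proof (rule lipschitz_onI)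
  fix x y :: real
  have "\<bar>cos x - cos y\<bar> = 2 * \<bar>sin ((x + y) / 2)\<bar> * \<bar>sin ((y - x) / 2)\<bar>"
    by (simp add: cos_diff_cos abs_mult)
  also have "\<dots> \<le> 2 * 1 * \<bar>(y - x) / 2\<bar>"
    using abs_sin_x_le_abs_x[of "(y - x) / 2"] by (intro mult_mono) auto
  finally show "dist (cos x) (cos y) \<le> 1 * dist x y"
    by (simp add: dist_real_def abs_minus_commute)
qed simp

lemma abs_cont_on_cos_shift: "abs_cont_on a b (\<lambda>x. c * cos (x - y))"
proof (rule lipschitz_on_imp_abs_cont_on)
  have "1-lipschitz_on {a..b} (\<lambda>x. x - y)"
    by (rule lipschitz_onI) (auto simp: dist_real_def)
  then have "(1 * 1)-lipschitz_on {a..b} (\<lambda>x. cos (x - y))"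
    by (rule lipschitz_on_compose2) (rule lipschitz_on_cos)
  then show "(\<bar>c\<bar> * (1 * 1))-lipschitz_on {a..b} (\<lambda>x. c * cos (x - y))"
    by (rule lipschitz_on_cmult_real)
qed

lemma abs_le_one_plus_square: "\<bar>t :: real\<bar> \<le> 1 + t\<^sup>2"
  using zero_le_power2[of "\<bar>t\<bar> - 1"] by (simp add: power2_eq_square algebra_simps)

lemma square_integrable_imp_set_integrable:
  fixes f :: "real \<Rightarrow> real"
  assumes "compact A" "set_borel_measurable lborel A f" "set_integrable lborel A (\<lambda>x. (f x)\<^sup>2)"
  shows "set_integrable lborel A f"
proof (rule set_integrable_bound[OF _ assms(2)])
  show "set_integrable lborel A (\<lambda>x. 1 + (f x)\<^sup>2)"
    using borel_integrable_compact[OF assms(1) continuous_on_const] assms(3)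
    unfolding set_integrable_def[symmetric] by (rule set_integral_add)
  show "AE x in lborel. x \<in> A \<longrightarrow> norm (f x) \<le> norm (1 + (f x)\<^sup>2)"
    using abs_le_one_plus_square by (intro AE_I2) auto
qed

lemma set_integrable_mult_bounded:
  fixes f g :: "'a \<Rightarrow> real"
  assumes f: "set_integrable M A f" and g: "set_borel_measurable M A g"
    and "AE x in M. x \<in> A \<longrightarrow> \<bar>g x\<bar> \<le> B"
  shows "set_integrable M A (\<lambda>x. f x * g x)"
proof (rule set_integrable_bound[OF set_integrable_mult_right[of B, OF f]])
  have "(\<lambda>x. indicator A x *\<^sub>R (f x * g x)) = (\<lambda>x. (indicator A x *\<^sub>R f x) * (indicator A x *\<^sub>R g x))"
    by (auto simp: indicator_def)
  then show "set_borel_measurable M A (\<lambda>x. f x * g x)"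
    using borel_measurable_integrable[OF f[unfolded set_integrable_def]] g
    unfolding set_borel_measurable_def by simp
  show "AE x in M. x \<in> A \<longrightarrow> norm (f x * g x) \<le> norm (B * f x)"
    using assms(3)
  proof eventually_elim
    case (elim x)
    show ?case
    proof
      assume "x \<in> A"
      then have "\<bar>f x\<bar> * \<bar>g x\<bar> \<le> \<bar>f x\<bar> * \<bar>B\<bar>"
        using elim by (intro mult_left_mono) auto
      then show "norm (f x * g x) \<le> norm (B * f x)"
        by (simp add: abs_mult mult.commute)
    qed
  qed
qed

section \<open>The kernel\<close>

text \<open>The value \<open>0\<close> on the diagonal \<open>x = y\<close> is immaterial: only a.e. derivatives enter.\<close>

definition K_i_deriv :: "real \<Rightarrow> real \<Rightarrow> real" where
  "K_i_deriv x y = -(pi/2) * sgn (x - y) * cos (x - y)"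

lemma has_real_derivative_K_i:
  assumes "x \<noteq> y"
  shows "((\<lambda>t. K_i t y) has_real_derivative K_i_deriv x y) (at x)"
proof (cases "x < y")
  case True
  have "((\<lambda>t. 2 - (pi/2) * sin (y - t)) has_real_derivative (pi/2) * cos (y - x)) (at x)"
    by (auto intro!: derivative_eq_intros)
  then have "((\<lambda>t. K_i t y) has_real_derivative (pi/2) * cos (y - x)) (at x)"
    by (rule has_field_derivative_transform_within_open[where S="{..<y}"])
       (use True in \<open>auto simp: K_i_def abs_of_neg\<close>)
  moreover have "cos (y - x) = cos (x - y)"
    by (metis cos_minus minus_diff_eq)
  ultimately show ?thesis
    using True by (simp add: K_i_deriv_def)
next
  case False
  with assms have "x > y"
    by simp
  have "((\<lambda>t. 2 - (pi/2) * sin (t - y)) has_real_derivative -(pi/2) * cos (x - y)) (at x)"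
    by (auto intro!: derivative_eq_intros)
  then have "((\<lambda>t. K_i t y) has_real_derivative -(pi/2) * cos (x - y)) (at x)"
    by (rule has_field_derivative_transform_within_open[where S="{y<..}"])
       (use \<open>x > y\<close> in \<open>auto simp: K_i_def abs_of_pos\<close>)
  then show ?thesis
    using \<open>x > y\<close> by (simp add: K_i_deriv_def)
qed

lemma abs_K_i_deriv_le: "\<bar>K_i_deriv x y\<bar> \<le> pi/2"
  by (simp add: K_i_deriv_def abs_mult sgn_real_def mult_le_one)

lemma lipschitz_on_K_i: "(pi/2)-lipschitz_on S (\<lambda>x. K_i x y)"
proof (rule lipschitz_onI)
  fix x z
  have diff: "K_i x y - K_i z y = pi/2 * (sin \<bar>z - y\<bar> - sin \<bar>x - y\<bar>)"
    by (simp add: K_i_def algebra_simps)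
  have "dist (K_i x y) (K_i z y) = pi/2 * dist (sin \<bar>z - y\<bar>) (sin \<bar>x - y\<bar>)"
    unfolding dist_real_def diff abs_mult by simp
  also have "\<dots> \<le> pi/2 * dist \<bar>z - y\<bar> \<bar>x - y\<bar>"
    using lipschitz_onD[OF lipschitz_on_sin] by (intro mult_left_mono) auto
  also have "\<dots> \<le> pi/2 * dist x z"
    by (intro mult_left_mono) (auto simp: dist_real_def)
  finally show "dist (K_i x y) (K_i z y) \<le> pi/2 * dist x z" .
qed simp

lemma abs_cont_on_K_i: "abs_cont_on a b (\<lambda>x. K_i x y)"
  by (rule lipschitz_on_imp_abs_cont_on[OF lipschitz_on_K_i])

lemma K_i_endpoints:
  assumes "y \<in> Delta"
  shows "K_i (-(pi/2)) y = K_i (pi/2) y"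
proof -
  have "\<bar>-(pi/2) - y\<bar> = pi/2 + y" "\<bar>pi/2 - y\<bar> = pi/2 - y"
    using assms by (auto simp: Delta_def)
  then show ?thesis
    by (simp add: K_i_def sin_add sin_diff)
qed

lemma H1_deriv_K_i: "H1_deriv (\<lambda>x. K_i x y) (\<lambda>x. K_i_deriv x y)"
  unfolding H1_deriv_def
proof (intro conjI)
  show "abs_cont_on (-(pi/2)) (pi/2) (\<lambda>x. K_i x y)"
    by (rule abs_cont_on_K_i)
  show "AE x in lborel. x \<in> Delta \<longrightarrow>
      ((\<lambda>x. K_i x y) has_real_derivative K_i_deriv x y) (at x within Delta)"
    using AE_lborel_singleton[of y]
    by eventually_elim (simp add: has_field_derivative_at_within[OF has_real_derivative_K_i])
  show "set_borel_measurable lborel Delta (\<lambda>x. K_i_deriv x y)"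
    unfolding set_borel_measurable_def K_i_deriv_def Delta_def by measurable
  show "set_integrable lborel Delta (\<lambda>x. (K_i_deriv x y)\<^sup>2)"
  proof (rule set_integrable_bound[where f="\<lambda>_. (pi/2)\<^sup>2"])
    show "set_integrable lborel Delta (\<lambda>_. (pi/2)\<^sup>2)"
      unfolding set_integrable_def by (rule borel_integrable_compact) (auto simp: Delta_def)
    show "set_borel_measurable lborel Delta (\<lambda>x. (K_i_deriv x y)\<^sup>2)"
      unfolding set_borel_measurable_def K_i_deriv_def Delta_def by measurable
    show "AE x in lborel. x \<in> Delta \<longrightarrow> norm ((K_i_deriv x y)\<^sup>2) \<le> norm ((pi/2)\<^sup>2)"
    proof (intro AE_I2 impI)
      fix x
      show "norm ((K_i_deriv x y)\<^sup>2) \<le> norm ((pi/2)\<^sup>2)"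
        using power_mono[OF abs_K_i_deriv_le[of x y] abs_ge_zero, of 2] by simp
    qed
  qed
qed

lemma H1_0_K_i:
  assumes "y \<in> Delta"
  shows "H1_0 (\<lambda>x. K_i x y)"
  unfolding H1_0_def H1_def using abs_cont_on_K_i H1_deriv_K_i K_i_endpoints[OF assms] by blast

lemma H1_deriv_K_i_unique:
  assumes "H1_deriv (\<lambda>x. K_i x y) k'"
  shows "AE x in lborel. x \<in> Delta \<longrightarrow> k' x = K_i_deriv x y"
proof -
  have "AE x in lborel. x \<in> Delta \<longrightarrow> ((\<lambda>x. K_i x y) has_real_derivative k' x) (at x within Delta)"
    using assms unfolding H1_deriv_def by (elim conjE)
  with AE_lborel_singleton[of y] AE_lborel_singleton[of "-(pi/2)"] AE_lborel_singleton[of "pi/2"]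
  show ?thesis
  proof eventually_elim
    case (elim x)
    show ?case
    proof
      assume "x \<in> Delta"
      with elim have "x \<in> interior Delta"
        by (auto simp: Delta_def)
      moreover have "((\<lambda>x. K_i x y) has_real_derivative k' x) (at x within Delta)"
        using elim(4) \<open>x \<in> Delta\<close> by blast
      ultimately have "((\<lambda>x. K_i x y) has_real_derivative k' x) (at x)"
        by (simp only: at_within_interior)
      then show "k' x = K_i_deriv x y"
        using DERIV_unique has_real_derivative_K_i[OF \<open>x \<noteq> y\<close>] by blast
    qed
  qed
qed

lemma K_i_pairing_left:
  assumes "-(pi/2) \<le> y" "abs_cont_on (-(pi/2)) y f"
    and "AE x in lborel. x \<in> {-(pi/2)..y} \<longrightarrow> (f has_real_derivative f' x) (at x within {-(pi/2)..y})"
  shows "((\<lambda>x. f' x * K_i_deriv x y + f x * (2 - K_i x y)) has_integral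
      pi/2 * f y + pi/2 * sin y * f (-(pi/2))) {-(pi/2)..y}"
proof -
  have "((\<lambda>x. f' x * (pi/2 * cos (x - y)) + f x * (- (pi/2) * sin (x - y))) has_integral
      f y * (pi/2 * cos (y - y)) - f (-(pi/2)) * (pi/2 * cos (-(pi/2) - y))) {-(pi/2)..y}"
    by (rule integration_by_parts_abs_cont[OF assms(1,2) abs_cont_on_cos_shift assms(3)])
      (auto intro!: AE_I2 derivative_eq_intros)
  then show ?thesis
  proof (rule has_integral_spike_finite[of "{y}", rotated 2, THEN has_integral_eq_rhs])
    fix x
    assume "x \<in> {-(pi/2)..y} - {y}"
    then have "x < y"
      by auto
    moreover have "sin (y - x) = - sin (x - y)"
      by (metis minus_diff_eq sin_minus)
    ultimately show "f' x * K_i_deriv x y + f x * (2 - K_i x y)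
        = f' x * (pi/2 * cos (x - y)) + f x * (- (pi/2) * sin (x - y))"
      by (simp add: K_i_deriv_def K_i_def abs_of_neg)
  qed (simp_all add: cos_diff algebra_simps)
qed

lemma K_i_pairing_right:
  assumes "y \<le> pi/2" "abs_cont_on y (pi/2) f"
    and "AE x in lborel. x \<in> {y..pi/2} \<longrightarrow> (f has_real_derivative f' x) (at x within {y..pi/2})"
  shows "((\<lambda>x. f' x * K_i_deriv x y + f x * (2 - K_i x y)) has_integral
      pi/2 * f y - pi/2 * sin y * f (pi/2)) {y..pi/2}"
proof -
  have "((\<lambda>x. f' x * (- (pi/2) * cos (x - y)) + f x * (pi/2 * sin (x - y))) has_integral
      f (pi/2) * (- (pi/2) * cos (pi/2 - y)) - f y * (- (pi/2) * cos (y - y))) {y..pi/2}"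
    by (rule integration_by_parts_abs_cont[OF assms(1,2) abs_cont_on_cos_shift assms(3)])
      (auto intro!: AE_I2 derivative_eq_intros)
  then show ?thesis
  proof (rule has_integral_spike_finite[of "{y}", rotated 2, THEN has_integral_eq_rhs])
    fix x
    assume "x \<in> {y..pi/2} - {y}"
    then show "f' x * K_i_deriv x y + f x * (2 - K_i x y)
        = f' x * (- (pi/2) * cos (x - y)) + f x * (pi/2 * sin (x - y))"
      by (simp add: K_i_deriv_def K_i_def)
  qed (simp_all add: cos_diff algebra_simps)
qed

lemma K_i_pairing_has_integral:
  assumes "y \<in> Delta" and f: "abs_cont_on (-(pi/2)) (pi/2) f" "f (-(pi/2)) = f (pi/2)"
    and f': "AE x in lborel. x \<in> Delta \<longrightarrow> (f has_real_derivative f' x) (at x within Delta)"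
  shows "((\<lambda>x. f' x * K_i_deriv x y + f x * (2 - K_i x y)) has_integral pi * f y) Delta"
proof -
  have y: "-(pi/2) \<le> y" "y \<le> pi/2"
    using assms(1) by (auto simp: Delta_def)
  have "((\<lambda>x. f' x * K_i_deriv x y + f x * (2 - K_i x y)) has_integral
      (pi/2 * f y + pi/2 * sin y * f (-(pi/2))) + (pi/2 * f y - pi/2 * sin y * f (pi/2))) {-(pi/2)..pi/2}"
  proof (rule has_integral_combine[OF y])
    show "((\<lambda>x. f' x * K_i_deriv x y + f x * (2 - K_i x y)) has_integral
        pi/2 * f y + pi/2 * sin y * f (-(pi/2))) {-(pi/2)..y}"
      using y by (intro K_i_pairing_left abs_cont_on_subinterval[OF f(1)]
          AE_has_real_derivative_within_subset[OF f'[unfolded Delta_def]]) auto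
    show "((\<lambda>x. f' x * K_i_deriv x y + f x * (2 - K_i x y)) has_integral
        pi/2 * f y - pi/2 * sin y * f (pi/2)) {y..pi/2}"
      using y by (intro K_i_pairing_right abs_cont_on_subinterval[OF f(1)]
          AE_has_real_derivative_within_subset[OF f'[unfolded Delta_def]]) auto
  qed
  then show ?thesis
    using f(2) by (simp add: Delta_def algebra_simps)
qed

lemma K_i_has_integral:
  assumes "y \<in> Delta"
  shows "((\<lambda>x. K_i x y) has_integral pi) Delta"
proof -
  have "((\<lambda>x. 0 * K_i_deriv x y + 1 * (2 - K_i x y)) has_integral pi * 1) Delta"
    by (rule K_i_pairing_has_integral[OF assms lipschitz_on_imp_abs_cont_on[OF lipschitz_on_constant]])
      (auto intro: AE_I2)
  then have "((\<lambda>x. 2 - K_i x y) has_integral pi) {-(pi/2)..pi/2}"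
    by (simp add: Delta_def)
  from has_integral_diff[OF has_integral_const_real[of "2::real"] this] show ?thesis
    by (simp add: Delta_def)
qed

lemma set_integral_K_i:
  assumes "y \<in> Delta"
  shows "(LINT x:Delta|lborel. K_i x y) = pi"
  using abs_cont_on_set_integrable[OF abs_cont_on_K_i] integral_unique[OF K_i_has_integral[OF assms]]
  by (simp add: Delta_def set_borel_integral_eq_integral(2))

lemma H1_deriv_set_integrable:
  assumes "H1_deriv f f'"
  shows "set_integrable lborel Delta f'"
proof (rule square_integrable_imp_set_integrable)
  show "compact Delta"
    by (simp add: Delta_def)
  show "set_borel_measurable lborel Delta f'" "set_integrable lborel Delta (\<lambda>x. (f' x)\<^sup>2)"
    using assms unfolding H1_deriv_def by blast+
qed

lemma set_integral_K_i_pairing: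
  assumes "H1_0 f" "y \<in> Delta" "H1_deriv f f'" "H1_deriv (\<lambda>x. K_i x y) k'"
  shows "(LINT x:Delta|lborel. f x * K_i x y - f' x * k' x) = 2 * (LINT x:Delta|lborel. f x) - pi * f y"
proof -
  have f: "abs_cont_on (-(pi/2)) (pi/2) f" "f (-(pi/2)) = f (pi/2)"
    and f': "AE x in lborel. x \<in> Delta \<longrightarrow> (f has_real_derivative f' x) (at x within Delta)"
    using assms(1,3) by (auto simp: H1_0_def H1_def H1_deriv_def)
  have k'_eq: "AE x in lborel. x \<in> Delta \<longrightarrow> k' x = K_i_deriv x y"
    by (rule H1_deriv_K_i_unique[OF assms(4)])
  have int_f: "set_integrable lborel Delta f"
    and int_fK: "set_integrable lborel Delta (\<lambda>x. f x * K_i x y)"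
    using abs_cont_on_set_integrable[OF f(1)] abs_cont_on_set_integrable[OF abs_cont_on_mult[OF f(1) abs_cont_on_K_i]]
    by (simp_all add: Delta_def)
  have int_f'k': "set_integrable lborel Delta (\<lambda>x. f' x * k' x)"
  proof (rule set_integrable_mult_bounded[OF H1_deriv_set_integrable[OF assms(3)]])
    show "set_borel_measurable lborel Delta k'"
      using assms(4) by (simp add: H1_deriv_def)
    show "AE x in lborel. x \<in> Delta \<longrightarrow> \<bar>k' x\<bar> \<le> pi/2"
      using k'_eq by eventually_elim (use abs_K_i_deriv_le in auto)
  qed
  have "((\<lambda>x. 2 * f x - (f' x * K_i_deriv x y + f x * (2 - K_i x y))) has_integral
      2 * integral Delta f - pi * f y) Delta"
    using set_borel_integral_eq_integral(1)[OF int_f]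
    by (intro has_integral_diff has_integral_mult_right integrable_integral
        K_i_pairing_has_integral[OF assms(2) f f'])
  then have "((\<lambda>x. f x * K_i x y - f' x * k' x) has_integral 2 * integral Delta f - pi * f y) Delta"
    by (rule has_integral_AE[THEN iffD1, rotated]) (use k'_eq in \<open>auto simp: algebra_simps\<close>)
  then show ?thesis
    using set_borel_integral_eq_integral(2)[OF set_integral_diff(1)[OF int_fK int_f'k']]
      set_borel_integral_eq_integral(2)[OF int_f] by (simp add: integral_unique)
qed

theorem theorem3p3:
  fixes f :: "real \<Rightarrow> real" and y :: real
  assumes "H1_0 f" and "y \<in> Delta"
  shows "H1_0 (\<lambda>x. K_i x y)
    \<and> (\<forall>f' k'. H1_deriv f f' \<longrightarrow> H1_deriv (\<lambda>x. K_i x y) k'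
          \<longrightarrow> f y = ip_i f f' (\<lambda>x. K_i x y) k')"
proof (intro conjI allI impI)
  show "H1_0 (\<lambda>x. K_i x y)"
    using assms(2) by (rule H1_0_K_i)
  fix f' k'
  assume "H1_deriv f f'" "H1_deriv (\<lambda>x. K_i x y) k'"
  then show "f y = ip_i f f' (\<lambda>x. K_i x y) k'"
    unfolding ip_i_def set_integral_K_i_pairing[OF assms \<open>H1_deriv f f'\<close> \<open>H1_deriv (\<lambda>x. K_i x y) k'\<close>]
      set_integral_K_i[OF assms(2)]
    by (simp add: power2_eq_square algebra_simps)
qed

end
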